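(* Let $n,N\ge 1$ be integers, let $\Phi:\mathbb{R}^n\times\mathbb{R}\to\mathbb{R}$ and $F:\mathbb{R}^n\times\mathbb{R}\to\mathbb{R}^n$ be twice continuously differentiable, and fix an initial state $x_0\in\mathbb{R}^n$. For a control vector $z=[u_0,u_1,\dots,u_N]^T\in\mathbb{R}^{N+1}$ (scalar controls $u_k\in\mathbb{R}$), define the states recursively by $x_{k+1}=F(x_k,u_k)$, $k=0,1,\dots,N-1$, and the cost $$J(x_0,z)=\sum_{k=0}^{N}\Phi(x_k,u_k),$$ regarded as a function of $z$ (each $x_k$ being a function of $x_0,u_0,\dots,u_{k-1}$). Define the Hamiltonian $H(x,u,\lambda)=\Phi(x,u)+\lambda^TF(x,u)$ for $x,\lambda\in\mathbb{R}^n$, $u\in\mathbb{R}$, and set $$G(x,u,\lambda)=\frac{\partial H(x,u,\lambda)}{\partial x}\in\mathbb{R}^n,\qquad L(x,u,\lambda)=\frac{\partial H(x,u,\lambda)}{\partial u}\in\mathbb{R}.$$ Define costates by the backward recursion $\lambda_{N+1}=\mathbf{0}$ and $\lambda_k=G(x_k,u_k,\lambda_{k+1})$ for $k=N,N-1,\dots,1$. Fix $i\in\{0,1,\dots,N\}$. For $k=0,1,\dots,N$ and $x,\lambda,\alpha,\beta\in\mathbb{R}^n$, $u\in\mathbb{R}$, define $$H_i^{(k)}(x,u,\lambda,\alpha,\beta)=\begin{cases}L(x,u,\lambda)+\alpha^TF(x,u)+\beta^TG(x,u,\lambda), & k=i,\\ \alpha^TF(x,u)+\beta^TG(x,u,\lambda),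 & k\neq i.\end{cases}$$ Define vectors $\beta_k,\alpha_k\in\mathbb{R}^n$ by the forward recursion $\beta_0=\mathbf{0}$, $$\beta_{k+1}=\frac{\partial H_i^{(k)}(x_k,u_k,\lambda_{k+1},\alpha_{k+1},\beta_k)}{\partial \lambda}\quad(k=0,1,\dots,N-1),$$ (the partial derivative with respect to the third argument), and the backward recursion $\alpha_{N+1}=\mathbf{0}$, $$\alpha_k=\frac{\partial H_i^{(k)}(x_k,u_k,\lambda_{k+1},\alpha_{k+1},\beta_k)}{\partial x}\quad(k=N,N-1,\dots,1)$$ (the partial derivative with respect to the first argument). Write $H^i_k=H_i^{(k)}(x_k,u_k,\lambda_{k+1},\alpha_{k+1},\beta_k)$. Then the $i$th row of the Hessian matrix $\nabla^2 J$ of $J(x_0,\cdot)$ with respect to $z$, evaluated at $z$, is $$\nabla^2 J(i)=\left[\frac{\partial H^i_0}{\partial u_0},\frac{\partial H^i_1}{\partial u_1},\dots,\frac{\partial H^i_N}{\partial u_N}\right],$$ where $\frac{\partial H^i_k}{\partial u_k}$ denotes the partial derivative of $H_i^{(k)}$ with respect to its second argument, evaluated at $(x_k,u_k,\lambda_{k+1},\alpha_{k+1},\beta_k)$.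
   Context: Rows and columns of the Hessian are indexed by $0,1,\dots,N$, corresponding to the components $u_0,\dots,u_N$ of $z$. $\mathbf{0}$ denotes the zero vector in $\mathbb{R}^n$. Partial derivatives with respect to vector arguments are column vectors (gradients). The paper treats the case of scalar controls $u_k$, stating that the extension to vector controls is analogous. The quantity $L(x_i,u_i,\lambda_{i+1})$, viewed as a function of $z$ through the state and costate recursions, equals the $i$th component $\partial J/\partial u_i$ of the gradient of $J$. *)

theory Defs
  imports "HOL-Analysis.Analysis"
begin

definition C2 :: "('a::euclidean_space \<Rightarrow> 'b::real_normed_vector) \<Rightarrow> bool" where
  "C2 f \<longleftrightarrow> (\<exists>f' f''. (\<forall>p. (f has_derivative blinfun_apply (f' p)) (at p)) \<and>
                        (\<forall>p. (f' has_derivative blinfun_apply (f'' p)) (at p)) \<and>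
                        continuous_on UNIV f'')"

definition grad :: "(real^'n \<Rightarrow> real) \<Rightarrow> real^'n \<Rightarrow> real^'n" where
  "grad f x = (\<chi> j. deriv (\<lambda>t. f (x + t *\<^sub>R axis j 1)) 0)"

text \<open>States: x_0 given, x_{k+1} = F(x_k,u_k); the control vector z = [u_0..u_N] is
  represented as a function nat => real (only components 0..N are used).\<close>
primrec state :: "(real^'n \<Rightarrow> real \<Rightarrow> real^'n) \<Rightarrow> real^'n \<Rightarrow> (nat \<Rightarrow> real) \<Rightarrow> nat \<Rightarrow> real^'n" where
  "state F x0 z 0 = x0"
| "state F x0 z (Suc k) = F (state F x0 z k) (z k)"

definition cost :: "(real^'n \<Rightarrow> real \<Rightarrow> real) \<Rightarrow> (real^'n \<Rightarrow> real \<Rightarrow> real^'n) \<Rightarrow> nat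
    \<Rightarrow> real^'n \<Rightarrow> (nat \<Rightarrow> real) \<Rightarrow> real" where
  "cost \<Phi> F N x0 z = (\<Sum>k=0..N. \<Phi> (state F x0 z k) (z k))"

definition Ham :: "(real^'n \<Rightarrow> real \<Rightarrow> real) \<Rightarrow> (real^'n \<Rightarrow> real \<Rightarrow> real^'n)
    \<Rightarrow> real^'n \<Rightarrow> real \<Rightarrow> real^'n \<Rightarrow> real" where
  "Ham \<Phi> F x u l = \<Phi> x u + l \<bullet> F x u"

definition Gx :: "(real^'n \<Rightarrow> real \<Rightarrow> real) \<Rightarrow> (real^'n \<Rightarrow> real \<Rightarrow> real^'n)
    \<Rightarrow> real^'n \<Rightarrow> real \<Rightarrow> real^'n \<Rightarrow> real^'n" where
  "Gx \<Phi> F x u l = grad (\<lambda>y. Ham \<Phi> F y u l) x"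

definition Lu :: "(real^'n \<Rightarrow> real \<Rightarrow> real) \<Rightarrow> (real^'n \<Rightarrow> real \<Rightarrow> real^'n)
    \<Rightarrow> real^'n \<Rightarrow> real \<Rightarrow> real^'n \<Rightarrow> real" where
  "Lu \<Phi> F x u l = deriv (\<lambda>v. Ham \<Phi> F x v l) u"

definition Hik :: "(real^'n \<Rightarrow> real \<Rightarrow> real) \<Rightarrow> (real^'n \<Rightarrow> real \<Rightarrow> real^'n) \<Rightarrow> nat \<Rightarrow> nat
    \<Rightarrow> real^'n \<Rightarrow> real \<Rightarrow> real^'n \<Rightarrow> real^'n \<Rightarrow> real^'n \<Rightarrow> real" where
  "Hik \<Phi> F i k x u l a b =
     (if k = i then Lu \<Phi> F x u l + a \<bullet> F x u + b \<bullet> Gx \<Phi> F x u l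
      else a \<bullet> F x u + b \<bullet> Gx \<Phi> F x u l)"

definition partial_u :: "((nat \<Rightarrow> real) \<Rightarrow> real) \<Rightarrow> nat \<Rightarrow> (nat \<Rightarrow> real) \<Rightarrow> real" where
  "partial_u f i z = deriv (\<lambda>s. f (z(i := s))) (z i)"

definition hessian_entry :: "((nat \<Rightarrow> real) \<Rightarrow> real) \<Rightarrow> (nat \<Rightarrow> real) \<Rightarrow> nat \<Rightarrow> nat \<Rightarrow> real" where
  "hessian_entry f z i j = partial_u (partial_u f i) j z"

end

theory Submission
  imports Defs
begin

(* Perturb a single control u_j and differentiate along this perturbation. For the gradient,
   pairing the linearised dynamics dx_{k+1} = F_x dx_k + F_u du_k with the costate
   lambda_{k+1} makes the sum of the d Phi(x_k, u_k) telescope, leaving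
   dJ/du_i = L(x_i, u_i, lambda_{i+1}) (the adjoint method).
   For the Hessian, along the perturbation the definitions of x_{k+1}, lambda_k and the gradient
   formula give H^i_k = [k = i] dJ/du_i + alpha_{k+1} . x_{k+1} + beta_k . lambda_k. Differentiating
   this once through the right-hand side and once by the chain rule through the arguments of
   H_i^(k), the recursions for alpha and beta turn the two results into a telescoping identity
   in alpha_k . dx_k - beta_k . d lambda_k; summing over k leaves d^2 J/du_j du_i = dH^i_j/du_j. *)

lemma has_derivative_eq_deriv_mult:
  fixes f :: "real \<Rightarrow> real"
  assumes f: "(f has_derivative D) (at x)"
  shows "D h = deriv f x * h"
proof -
  have scale: "D t = t * D 1" for t
    using linear.scaleR[OF has_derivative_linear[OF f], of t 1] by simp
  have "(f has_real_derivative D 1) (at x)"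
    using f by (rule has_derivative_imp_has_field_derivative) (rule scale[symmetric])
  then show ?thesis
    using scale[of h] by (simp add: DERIV_imp_deriv mult.commute)
qed

lemma has_derivative_eq_grad_inner:
  fixes f :: "real^'n \<Rightarrow> real"
  assumes f: "(f has_derivative D) (at x)"
  shows "D h = grad f x \<bullet> h"
proof -
  have lin: "linear D"
    using f by (rule has_derivative_linear)
  have grad_component: "grad f x $ j = D (axis j 1)" for j
  proof -
    have "((f \<circ> (\<lambda>t. x + t *\<^sub>R axis j 1)) has_derivative (D \<circ> (\<lambda>t. t *\<^sub>R axis j 1))) (at 0)"
      by (rule diff_chain_at) (use f in \<open>auto intro!: derivative_eq_intros\<close>)
    then have "((\<lambda>t. f (x + t *\<^sub>R axis j 1)) has_derivative (\<lambda>t. D (t *\<^sub>R axis j 1))) (at 0)"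
      by (simp add: o_def)
    then have "deriv (\<lambda>t. f (x + t *\<^sub>R axis j 1)) 0 * 1 = D (1 *\<^sub>R axis j 1)"
      by (rule has_derivative_eq_deriv_mult[symmetric])
    then show ?thesis
      unfolding grad_def by simp
  qed
  have "D h = D (\<Sum>j\<in>UNIV. h $ j *\<^sub>R axis j 1)"
    using basis_expansion[of h] by (simp add: scalar_mult_eq_scaleR)
  also have "\<dots> = (\<Sum>j\<in>UNIV. grad f x $ j * h $ j)"
    by (simp add: linear_sum[OF lin] linear.scaleR[OF lin] grad_component mult.commute)
  finally show ?thesis
    by (simp add: inner_vec_def)
qed

lemma has_derivative_eq_partials:
  fixes h :: "real^'n \<Rightarrow> real \<Rightarrow> real^'m \<Rightarrow> real"
  assumes D: "((\<lambda>(x, u, l). h x u l) has_derivative D) (at (x, u, l))"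
  shows "D (dx, du, dl) = grad (\<lambda>y. h y u l) x \<bullet> dx + deriv (\<lambda>v. h x v l) u * du
    + grad (\<lambda>m. h x u m) l \<bullet> dl"
proof -
  have "D (dx, du, dl) = D ((dx, 0, 0) + (0, du, 0) + (0, 0, dl))"
    by simp
  also have "\<dots> = D (dx, 0, 0) + D (0, du, 0) + D (0, 0, dl)"
    by (simp only: linear_add[OF has_derivative_linear[OF D]])
  finally have split: "D (dx, du, dl) = D (dx, 0, 0) + D (0, du, 0) + D (0, 0, dl)" .
  have slice_x: "((\<lambda>y. h y u l) has_derivative (\<lambda>d. D (d, 0, 0))) (at x)"
  proof -
    have "((\<lambda>y. (y, u, l)) has_derivative (\<lambda>d. (d, 0, 0))) (at x)"
      by (auto intro!: derivative_eq_intros simp: zero_prod_def)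
    from has_derivative_compose[OF this D] show ?thesis
      by simp
  qed
  have slice_u: "((\<lambda>v. h x v l) has_derivative (\<lambda>d. D (0, d, 0))) (at u)"
  proof -
    have "((\<lambda>v. (x, v, l)) has_derivative (\<lambda>d. (0, d, 0))) (at u)"
      by (auto intro!: derivative_eq_intros simp: zero_prod_def)
    from has_derivative_compose[OF this D] show ?thesis
      by simp
  qed
  have slice_l: "((\<lambda>m. h x u m) has_derivative (\<lambda>d. D (0, 0, d))) (at l)"
  proof -
    have "((\<lambda>m. (x, u, m)) has_derivative (\<lambda>d. (0, 0, d))) (at l)"
      by (auto intro!: derivative_eq_intros simp: zero_prod_def)
    from has_derivative_compose[OF this D] show ?thesis
      by simp
  qed
  show ?thesis
    unfolding split has_derivative_eq_grad_inner[OF slice_x] has_derivative_eq_deriv_mult[OF slice_u]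
      has_derivative_eq_grad_inner[OF slice_l] ..
qed

lemma has_vector_derivative_partials:
  fixes h :: "real^'n \<Rightarrow> real \<Rightarrow> real^'m \<Rightarrow> real"
  assumes h: "(\<lambda>(x, u, l). h x u l) differentiable at (X s, U s, L s)"
    and X: "(X has_vector_derivative X') (at s)"
    and U: "(U has_vector_derivative U') (at s)"
    and L: "(L has_vector_derivative L') (at s)"
  shows "((\<lambda>t. h (X t) (U t) (L t)) has_vector_derivative
      grad (\<lambda>y. h y (U s) (L s)) (X s) \<bullet> X' + deriv (\<lambda>v. h (X s) v (L s)) (U s) * U'
      + grad (\<lambda>m. h (X s) (U s) m) (L s) \<bullet> L') (at s)"
proof -
  obtain D where D: "((\<lambda>(x, u, l). h x u l) has_derivative D) (at (X s, U s, L s))"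
    using h unfolding differentiable_def by blast
  have "((\<lambda>t. (X t, U t, L t)) has_vector_derivative (X', U', L')) (at s)"
    by (intro has_vector_derivative_Pair X U L)
  from vector_derivative_diff_chain_within[OF this has_derivative_at_withinI[OF D]]
  have "((\<lambda>t. h (X t) (U t) (L t)) has_vector_derivative D (X', U', L')) (at s)"
    by (simp add: o_def)
  then show ?thesis
    by (simp add: has_derivative_eq_partials[OF D])
qed

lemma has_vector_derivative_inner_right:
  assumes "(X has_vector_derivative X') F"
  shows "((\<lambda>t. a \<bullet> X t) has_vector_derivative a \<bullet> X') F"
  using assms unfolding has_vector_derivative_def by (auto intro!: derivative_eq_intros)

lemma fun_upd_has_vector_derivative:
  "((\<lambda>s. (z(j := s)) k) has_vector_derivative (if k = j then 1 else 0)) (at s0)"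
  by (cases "k = j") (auto intro!: derivative_eq_intros)

lemma snd_snd_differentiable: "(\<lambda>p. snd (snd p)) differentiable at p"
  by (auto intro!: differentiableI derivative_eq_intros)

lemma differentiable_blinfun_apply_triple:
  assumes A: "\<And>q. A differentiable at q"
  shows "(\<lambda>p. blinfun_apply (A (fst p, fst (snd p))) c) differentiable at p"
proof (rule differentiable_compose[of "\<lambda>B. blinfun_apply B c"])
  show "(\<lambda>B. blinfun_apply B c) differentiable at (A (fst p, fst (snd p)))"
    by (intro bounded_linear_imp_differentiable
        bounded_bilinear.bounded_linear_left[OF bounded_bilinear_blinfun_apply])
  have "(\<lambda>p. (fst p, fst (snd p))) differentiable at p"
    by (auto intro!: differentiableI derivative_eq_intros)
  then show "(\<lambda>p. A (fst p, fst (snd p))) differentiable at p"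
    by (rule differentiable_compose[OF A])
qed

lemma sum_eq_by_telescoping:
  fixes a b p :: "nat \<Rightarrow> 'a::cancel_comm_monoid_add"
  assumes step: "\<And>k. k \<le> N \<Longrightarrow> a k + p (Suc k) = b k + p k"
    and "p 0 = 0" and "p (Suc N) = 0"
  shows "(\<Sum>k\<le>N. a k) = (\<Sum>k\<le>N. b k)"
proof -
  have "(\<Sum>k\<le>N. a k) + (\<Sum>k\<le>N. p (Suc k)) = (\<Sum>k\<le>N. b k) + (\<Sum>k\<le>N. p k)"
    unfolding sum.distrib[symmetric] by (rule sum.cong) (simp_all add: step)
  moreover have "(\<Sum>k\<le>N. p (Suc k)) = (\<Sum>k\<le>N. p k)"
    using sum.atMost_Suc_shift[of p N] sum.atMost_Suc[of p N] assms(2,3) by simp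
  ultimately show ?thesis
    by simp
qed

(* The costates lambda_k of the statement, continued by the same recursion down to k = 0 and
   by 0 from k = N + 1 on. *)
function costate :: "(real^'n \<Rightarrow> real \<Rightarrow> real) \<Rightarrow> (real^'n \<Rightarrow> real \<Rightarrow> real^'n) \<Rightarrow> nat
    \<Rightarrow> real^'n \<Rightarrow> (nat \<Rightarrow> real) \<Rightarrow> nat \<Rightarrow> real^'n" where
  "costate \<Phi> F N x0 z k =
     (if N < k then 0 else Gx \<Phi> F (state F x0 z k) (z k) (costate \<Phi> F N x0 z (Suc k)))"
  by pat_completeness auto
termination
  by (relation "Wellfounded.measure (\<lambda>(\<Phi>, F, N, x0, z, k). Suc N - k)") auto

declare costate.simps [simp del]

lemma costate_beyond [simp]: "N < k \<Longrightarrow> costate \<Phi> F N x0 z k = 0"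
  by (simp add: costate.simps)

lemma costate_step:
  "k \<le> N \<Longrightarrow> costate \<Phi> F N x0 z k = Gx \<Phi> F (state F x0 z k) (z k) (costate \<Phi> F N x0 z (Suc k))"
  by (simp add: costate.simps)

lemma costate_unique:
  assumes "lam (Suc N) = 0"
    and "\<And>k. 1 \<le> k \<Longrightarrow> k \<le> N \<Longrightarrow> lam k = Gx \<Phi> F (state F x0 z k) (z k) (lam (Suc k))"
    and "1 \<le> k" and "k \<le> Suc N"
  shows "lam k = costate \<Phi> F N x0 z k"
  using \<open>k \<le> Suc N\<close>
proof (induction rule: inc_induct)
  case base
  then show ?case
    using assms(1) by simp
next
  case (step n)
  then have "lam n = Gx \<Phi> F (state F x0 z n) (z n) (lam (Suc n))"
    using assms(2,3) by simp
  then show ?case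
    using step by (simp add: costate_step)
qed

definition state_variation :: "(real^'n \<Rightarrow> real \<Rightarrow> real^'n) \<Rightarrow> real^'n \<Rightarrow> (nat \<Rightarrow> real)
    \<Rightarrow> nat \<Rightarrow> nat \<Rightarrow> real^'n" where
  "state_variation F x0 z j k = vector_derivative (\<lambda>s. state F x0 (z(j := s)) k) (at (z j))"

definition costate_variation :: "(real^'n \<Rightarrow> real \<Rightarrow> real) \<Rightarrow> (real^'n \<Rightarrow> real \<Rightarrow> real^'n) \<Rightarrow> nat
    \<Rightarrow> real^'n \<Rightarrow> (nat \<Rightarrow> real) \<Rightarrow> nat \<Rightarrow> nat \<Rightarrow> real^'n" where
  "costate_variation \<Phi> F N x0 z j k = vector_derivative (\<lambda>s. costate \<Phi> F N x0 (z(j := s)) k) (at (z j))"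

lemma state_variation_0 [simp]: "state_variation F x0 z j 0 = 0"
  by (simp add: state_variation_def)

lemma costate_variation_beyond [simp]: "N < k \<Longrightarrow> costate_variation \<Phi> F N x0 z j k = 0"
  by (simp add: costate_variation_def)

locale smooth_control =
  fixes \<Phi> :: "real^'n \<Rightarrow> real \<Rightarrow> real"
    and F :: "real^'n \<Rightarrow> real \<Rightarrow> real^'n"
    and \<Phi>' :: "(real^'n) \<times> real \<Rightarrow> ((real^'n) \<times> real) \<Rightarrow>\<^sub>L real"
    and F' :: "(real^'n) \<times> real \<Rightarrow> ((real^'n) \<times> real) \<Rightarrow>\<^sub>L (real^'n)"
  assumes Phi_has_derivative: "\<And>q. ((\<lambda>(x, u). \<Phi> x u) has_derivative blinfun_apply (\<Phi>' q)) (at q)"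
    and F_has_derivative: "\<And>q. ((\<lambda>(x, u). F x u) has_derivative blinfun_apply (F' q)) (at q)"
    and Phi'_differentiable: "\<And>q. \<Phi>' differentiable at q"
    and F'_differentiable: "\<And>q. F' differentiable at q"
begin

lemma Ham_has_derivative:
  "((\<lambda>(x, u, l). Ham \<Phi> F x u l) has_derivative
     (\<lambda>(dx, du, dl). \<Phi>' (x, u) (dx, du) + dl \<bullet> F x u + l \<bullet> F' (x, u) (dx, du))) (at (x, u, l))"
proof -
  have xu: "((\<lambda>p. (fst p, fst (snd p))) has_derivative (\<lambda>d. (fst d, fst (snd d)))) (at p)"
    for p :: "(real^'n) \<times> real \<times> (real^'n)"
    by (auto intro!: derivative_eq_intros)
  have Phi: "((\<lambda>p. \<Phi> (fst p) (fst (snd p))) has_derivative (\<lambda>d. \<Phi>' (x, u) (fst d, fst (snd d))))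
      (at (x, u, l))"
    using has_derivative_compose[OF xu[of "(x, u, l)"] Phi_has_derivative] by simp
  have F: "((\<lambda>p. F (fst p) (fst (snd p))) has_derivative (\<lambda>d. F' (x, u) (fst d, fst (snd d))))
      (at (x, u, l))"
    using has_derivative_compose[OF xu[of "(x, u, l)"] F_has_derivative] by simp
  have "((\<lambda>p. snd (snd p) \<bullet> F (fst p) (fst (snd p))) has_derivative
      (\<lambda>d. l \<bullet> F' (x, u) (fst d, fst (snd d)) + snd (snd d) \<bullet> F x u)) (at (x, u, l))"
    using has_derivative_inner[OF has_derivative_snd[OF has_derivative_snd[OF has_derivative_ident]] F]
    by simp
  from has_derivative_add[OF Phi this] show ?thesis
    by (simp add: Ham_def case_prod_beta' algebra_simps)
qed

lemma Ham_partials: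
  "Gx \<Phi> F x u l \<bullet> dx + Lu \<Phi> F x u l * du = \<Phi>' (x, u) (dx, du) + l \<bullet> F' (x, u) (dx, du)"
  using has_derivative_eq_partials[OF Ham_has_derivative[of x u l], of dx du 0] by (simp add: Gx_def Lu_def)

lemma Lu_eq: "Lu \<Phi> F x u l = \<Phi>' (x, u) (0, 1) + l \<bullet> F' (x, u) (0, 1)"
  using Ham_partials[of x u l 0 1] by simp

lemma Gx_eq:
  "Gx \<Phi> F x u l = (\<Sum>j\<in>UNIV. (\<Phi>' (x, u) (axis j 1, 0) + l \<bullet> F' (x, u) (axis j 1, 0)) *\<^sub>R axis j 1)"
proof -
  have "Gx \<Phi> F x u l $ j = \<Phi>' (x, u) (axis j 1, 0) + l \<bullet> F' (x, u) (axis j 1, 0)" for j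
    using Ham_partials[of x u l "axis j 1" 0] by (simp add: cart_eq_inner_axis)
  then show ?thesis
    using basis_expansion[of "Gx \<Phi> F x u l"] by (simp add: scalar_mult_eq_scaleR)
qed

lemma F_triple_differentiable: "(\<lambda>p. F (fst p) (fst (snd p))) differentiable at p"
proof -
  have "((\<lambda>p. (fst p, fst (snd p))) has_derivative (\<lambda>d. (fst d, fst (snd d)))) (at p)"
    by (auto intro!: derivative_eq_intros)
  from has_derivative_compose[OF this F_has_derivative] show ?thesis
    by (auto intro: differentiableI)
qed

lemma Lu_differentiable: "(\<lambda>(x, u, l). Lu \<Phi> F x u l) differentiable at p"
proof -
  have "(\<lambda>(x, u, l). Lu \<Phi> F x u l)
      = (\<lambda>p. \<Phi>' (fst p, fst (snd p)) (0, 1) + snd (snd p) \<bullet> F' (fst p, fst (snd p)) (0, 1))"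
    by (simp add: fun_eq_iff Lu_eq)
  then show ?thesis
    by (simp only:) (intro differentiable_add differentiable_inner snd_snd_differentiable
        differentiable_blinfun_apply_triple Phi'_differentiable F'_differentiable)
qed

lemma Gx_differentiable: "(\<lambda>(x, u, l). Gx \<Phi> F x u l) differentiable at p"
proof -
  have "(\<lambda>(x, u, l). Gx \<Phi> F x u l) = (\<lambda>p. \<Sum>j\<in>UNIV.
      (\<Phi>' (fst p, fst (snd p)) (axis j 1, 0) + snd (snd p) \<bullet> F' (fst p, fst (snd p)) (axis j 1, 0))
        *\<^sub>R axis j 1)"
    by (simp add: fun_eq_iff Gx_eq)
  then show ?thesis
    by (simp only:) (intro differentiable_sum ballI finite differentiable_scaleR differentiable_add
        differentiable_inner differentiable_const snd_snd_differentiable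
        differentiable_blinfun_apply_triple Phi'_differentiable F'_differentiable)
qed

lemma Hik_differentiable: "(\<lambda>(x, u, l). Hik \<Phi> F i k x u l a b) differentiable at p"
proof -
  have "(\<lambda>(x, u, l). Hik \<Phi> F i k x u l a b) = (\<lambda>p.
      (if k = i then 1 else 0) * (\<lambda>(x, u, l). Lu \<Phi> F x u l) p + a \<bullet> F (fst p) (fst (snd p))
      + b \<bullet> (\<lambda>(x, u, l). Gx \<Phi> F x u l) p)"
    by (auto simp: fun_eq_iff Hik_def)
  then show ?thesis
    by (simp only:) (intro differentiable_add differentiable_mult differentiable_inner
        differentiable_const Lu_differentiable Gx_differentiable F_triple_differentiable)
qed

lemma F_has_vector_derivative:
  assumes "(X has_vector_derivative X') (at s)" and "(U has_vector_derivative U') (at s)"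
  shows "((\<lambda>t. F (X t) (U t)) has_vector_derivative F' (X s, U s) (X', U')) (at s)"
  using vector_derivative_diff_chain_within[OF has_vector_derivative_Pair[OF assms]
      has_derivative_at_withinI[OF F_has_derivative]]
  by (simp add: o_def)

lemma Phi_has_vector_derivative:
  assumes "(X has_vector_derivative X') (at s)" and "(U has_vector_derivative U') (at s)"
  shows "((\<lambda>t. \<Phi> (X t) (U t)) has_vector_derivative \<Phi>' (X s, U s) (X', U')) (at s)"
  using vector_derivative_diff_chain_within[OF has_vector_derivative_Pair[OF assms]
      has_derivative_at_withinI[OF Phi_has_derivative]]
  by (simp add: o_def)

lemma state_has_vector_derivative:
  "((\<lambda>s. state F x0 (z(j := s)) k) has_vector_derivative state_variation F x0 z j k) (at (z j))"
proof (induction k)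
  case 0
  then show ?case
    by simp
next
  case (Suc k)
  from F_has_vector_derivative[OF Suc.IH fun_upd_has_vector_derivative[of z j k "z j"]]
  have step: "((\<lambda>s. state F x0 (z(j := s)) (Suc k)) has_vector_derivative
      F' (state F x0 z k, z k) (state_variation F x0 z j k, if k = j then 1 else 0)) (at (z j))"
    by (simp only: fun_upd_triv state.simps)
  then show ?case
    unfolding state_variation_def[of F x0 z j "Suc k"] vector_derivative_at[OF step] .
qed

lemma state_variation_Suc:
  "state_variation F x0 z j (Suc k)
    = F' (state F x0 z k, z k) (state_variation F x0 z j k, if k = j then 1 else 0)"
  using vector_derivative_at[OF F_has_vector_derivative[OF state_has_vector_derivative[of x0 z j k]
        fun_upd_has_vector_derivative[of z j k "z j"]]]
  by (simp add: state_variation_def)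

lemma costate_has_vector_derivative:
  "((\<lambda>s. costate \<Phi> F N x0 (z(j := s)) k) has_vector_derivative costate_variation \<Phi> F N x0 z j k)
    (at (z j))"
proof (induction "Suc N - k" arbitrary: k)
  case 0
  then show ?case
    by simp
next
  case (Suc m)
  then have "k \<le> N" and IH: "((\<lambda>s. costate \<Phi> F N x0 (z(j := s)) (Suc k)) has_vector_derivative
      costate_variation \<Phi> F N x0 z j (Suc k)) (at (z j))"
    by auto
  have "((\<lambda>s. (state F x0 (z(j := s)) k, (z(j := s)) k, costate \<Phi> F N x0 (z(j := s)) (Suc k)))
      has_vector_derivative (state_variation F x0 z j k, if k = j then 1 else 0,
        costate_variation \<Phi> F N x0 z j (Suc k))) (at (z j))"
    by (intro has_vector_derivative_Pair state_has_vector_derivative fun_upd_has_vector_derivative IH)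
  then have "(\<lambda>s. (state F x0 (z(j := s)) k, (z(j := s)) k, costate \<Phi> F N x0 (z(j := s)) (Suc k)))
      differentiable at (z j)"
    by (rule differentiableI_vector)
  then have "(\<lambda>s. Gx \<Phi> F (state F x0 (z(j := s)) k) ((z(j := s)) k) (costate \<Phi> F N x0 (z(j := s)) (Suc k)))
      differentiable at (z j)"
    using differentiable_compose[OF Gx_differentiable] by fastforce
  then show ?case
    using \<open>k \<le> N\<close> by (simp add: costate_step vector_derivative_works costate_variation_def)
qed

lemma partial_cost_eq_Lu:
  assumes "i \<le> N"
  shows "partial_u (cost \<Phi> F N x0) i z = Lu \<Phi> F (state F x0 z i) (z i) (costate \<Phi> F N x0 z (Suc i))"
proof -
  define \<delta>x where "\<delta>x = state_variation F x0 z i"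
  define lam where "lam = costate \<Phi> F N x0 z"
  define U where "U = (\<lambda>k. if k = i then 1 else (0::real))"
  have "((\<lambda>s. \<Phi> (state F x0 (z(i := s)) k) ((z(i := s)) k)) has_vector_derivative
      \<Phi>' (state F x0 z k, z k) (\<delta>x k, U k)) (at (z i))" for k
    using Phi_has_vector_derivative[OF state_has_vector_derivative[of x0 z i k]
        fun_upd_has_vector_derivative[of z i k "z i"]]
    by (simp only: fun_upd_triv \<delta>x_def U_def)
  then have "((\<lambda>s. cost \<Phi> F N x0 (z(i := s))) has_real_derivative
      (\<Sum>k\<le>N. \<Phi>' (state F x0 z k, z k) (\<delta>x k, U k))) (at (z i))"
    unfolding cost_def atLeast0AtMost has_real_derivative_iff_has_vector_derivative
    by (rule has_vector_derivative_sum)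
  moreover have "(\<Sum>k\<le>N. \<Phi>' (state F x0 z k, z k) (\<delta>x k, U k))
      = (\<Sum>k\<le>N. U k * Lu \<Phi> F (state F x0 z k) (z k) (lam (Suc k)))"
  proof (rule sum_eq_by_telescoping[where p = "\<lambda>k. lam k \<bullet> \<delta>x k"])
    fix k
    assume "k \<le> N"
    then show "\<Phi>' (state F x0 z k, z k) (\<delta>x k, U k) + lam (Suc k) \<bullet> \<delta>x (Suc k)
        = U k * Lu \<Phi> F (state F x0 z k) (z k) (lam (Suc k)) + lam k \<bullet> \<delta>x k"
      using Ham_partials[of "state F x0 z k" "z k" "lam (Suc k)" "\<delta>x k" "U k"]
      by (simp add: \<delta>x_def lam_def U_def state_variation_Suc costate_step algebra_simps)
  qed (simp_all add: \<delta>x_def lam_def)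
  moreover have "(\<Sum>k\<le>N. U k * Lu \<Phi> F (state F x0 z k) (z k) (lam (Suc k)))
      = Lu \<Phi> F (state F x0 z i) (z i) (lam (Suc i))"
    using assms by (simp add: U_def if_distrib[of "\<lambda>c. c * _"] cong: if_cong)
  ultimately show ?thesis
    unfolding partial_u_def lam_def by (simp add: DERIV_imp_deriv)
qed

lemma partial_cost_has_derivative_hessian_entry:
  assumes "i \<le> N"
  shows "((\<lambda>s. partial_u (cost \<Phi> F N x0) i (z(j := s))) has_real_derivative
    hessian_entry (cost \<Phi> F N x0) z i j) (at (z j))"
proof -
  have "(\<lambda>s. Lu \<Phi> F (state F x0 (z(j := s)) i) ((z(j := s)) i) (costate \<Phi> F N x0 (z(j := s)) (Suc i)))
      differentiable at (z j)"
    using has_vector_derivative_partials[OF Lu_differentiable state_has_vector_derivative[of x0 z j i]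
        fun_upd_has_vector_derivative[of z j i "z j"] costate_has_vector_derivative[of N x0 z j "Suc i"]]
    by (auto intro: differentiableI_vector)
  then have "(\<lambda>s. partial_u (cost \<Phi> F N x0) i (z(j := s))) differentiable at (z j)"
    by (simp add: partial_cost_eq_Lu[OF assms])
  then show ?thesis
    by (simp add: DERIV_deriv_iff_real_differentiable hessian_entry_def partial_u_def[of "partial_u _ i"])
qed

lemma Hik_variation_step:
  assumes "i \<le> N" and "k \<le> N"
  shows "(if k = i then hessian_entry (cost \<Phi> F N x0) z i j else 0)
      + a \<bullet> state_variation F x0 z j (Suc k) + b \<bullet> costate_variation \<Phi> F N x0 z j k
    = grad (\<lambda>y. Hik \<Phi> F i k y (z k) (costate \<Phi> F N x0 z (Suc k)) a b) (state F x0 z k)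
        \<bullet> state_variation F x0 z j k
      + deriv (\<lambda>v. Hik \<Phi> F i k (state F x0 z k) v (costate \<Phi> F N x0 z (Suc k)) a b) (z k)
        * (if k = j then 1 else 0)
      + grad (\<lambda>l. Hik \<Phi> F i k (state F x0 z k) (z k) l a b) (costate \<Phi> F N x0 z (Suc k))
        \<bullet> costate_variation \<Phi> F N x0 z j (Suc k)"
proof -
  let ?H = "\<lambda>s. Hik \<Phi> F i k (state F x0 (z(j := s)) k) ((z(j := s)) k)
    (costate \<Phi> F N x0 (z(j := s)) (Suc k)) a b"
  have derivative_via_partials: "(?H has_vector_derivative
      grad (\<lambda>y. Hik \<Phi> F i k y (z k) (costate \<Phi> F N x0 z (Suc k)) a b) (state F x0 z k)
        \<bullet> state_variation F x0 z j k
      + deriv (\<lambda>v. Hik \<Phi> F i k (state F x0 z k) v (costate \<Phi> F N x0 z (Suc k)) a b) (z k)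
        * (if k = j then 1 else 0)
      + grad (\<lambda>l. Hik \<Phi> F i k (state F x0 z k) (z k) l a b) (costate \<Phi> F N x0 z (Suc k))
        \<bullet> costate_variation \<Phi> F N x0 z j (Suc k)) (at (z j))"
    using has_vector_derivative_partials[OF Hik_differentiable state_has_vector_derivative[of x0 z j k]
        fun_upd_has_vector_derivative[of z j k "z j"] costate_has_vector_derivative[of N x0 z j "Suc k"]]
    by (simp only: fun_upd_triv)
  have "?H = (\<lambda>s. (if k = i then partial_u (cost \<Phi> F N x0) i (z(j := s)) else 0)
      + a \<bullet> state F x0 (z(j := s)) (Suc k) + b \<bullet> costate \<Phi> F N x0 (z(j := s)) k)"
    by (simp add: fun_eq_iff Hik_def partial_cost_eq_Lu[OF assms(1)] costate_step[OF assms(2)])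
  moreover have "((\<lambda>s. (if k = i then partial_u (cost \<Phi> F N x0) i (z(j := s)) else 0)
      + a \<bullet> state F x0 (z(j := s)) (Suc k) + b \<bullet> costate \<Phi> F N x0 (z(j := s)) k) has_vector_derivative
      (if k = i then hessian_entry (cost \<Phi> F N x0) z i j else 0)
      + a \<bullet> state_variation F x0 z j (Suc k) + b \<bullet> costate_variation \<Phi> F N x0 z j k) (at (z j))"
    using partial_cost_has_derivative_hessian_entry[OF assms(1), of x0 z j]
    by (intro has_vector_derivative_add has_vector_derivative_inner_right state_has_vector_derivative
        costate_has_vector_derivative)
      (auto simp: has_real_derivative_iff_has_vector_derivative)
  ultimately have "(?H has_vector_derivative
      (if k = i then hessian_entry (cost \<Phi> F N x0) z i j else 0)
      + a \<bullet> state_variation F x0 z j (Suc k) + b \<bullet> costate_variation \<Phi> F N x0 z j k) (at (z j))"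
    by simp
  from vector_derivative_unique_at[OF this derivative_via_partials] show ?thesis .
qed

lemma hessian_entry_cost_eq_deriv_Hik:
  fixes lam \<alpha> \<beta> :: "nat \<Rightarrow> real^'n"
  assumes "i \<le> N" and "j \<le> N"
    and lam_end: "lam (N + 1) = 0"
    and lam_rec: "\<And>k. 1 \<le> k \<Longrightarrow> k \<le> N \<Longrightarrow> lam k = Gx \<Phi> F (state F x0 z k) (z k) (lam (k + 1))"
    and beta_0: "\<beta> 0 = 0"
    and beta_rec: "\<And>k. k < N \<Longrightarrow>
      \<beta> (k + 1) = grad (\<lambda>l. Hik \<Phi> F i k (state F x0 z k) (z k) l (\<alpha> (k + 1)) (\<beta> k)) (lam (k + 1))"
    and alpha_end: "\<alpha> (N + 1) = 0"
    and alpha_rec: "\<And>k. 1 \<le> k \<Longrightarrow> k \<le> N \<Longrightarrow>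
      \<alpha> k = grad (\<lambda>y. Hik \<Phi> F i k y (z k) (lam (k + 1)) (\<alpha> (k + 1)) (\<beta> k)) (state F x0 z k)"
  shows "hessian_entry (cost \<Phi> F N x0) z i j
    = deriv (\<lambda>v. Hik \<Phi> F i j (state F x0 z j) v (lam (j + 1)) (\<alpha> (j + 1)) (\<beta> j)) (z j)"
proof -
  have lam_costate: "lam (Suc k) = costate \<Phi> F N x0 z (Suc k)" if "k \<le> N" for k
    using costate_unique[of lam N \<Phi> F x0 z "Suc k"] lam_end lam_rec that by simp
  define \<delta>x where "\<delta>x = state_variation F x0 z j"
  define \<delta>lam where "\<delta>lam = costate_variation \<Phi> F N x0 z j"
  define H\<^sub>u where "H\<^sub>u = (\<lambda>k. deriv (\<lambda>v. Hik \<Phi> F i k (state F x0 z k) v (lam (Suc k))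
    (\<alpha> (Suc k)) (\<beta> k)) (z k))"
  have "(\<Sum>k\<le>N. if k = i then hessian_entry (cost \<Phi> F N x0) z i j else 0)
      = (\<Sum>k\<le>N. if k = j then H\<^sub>u k else 0)"
  proof (rule sum_eq_by_telescoping[where p = "\<lambda>k. \<alpha> k \<bullet> \<delta>x k - \<beta> k \<bullet> \<delta>lam k"])
    fix k
    assume "k \<le> N"
    \<comment> \<open>Where the recursions for alpha and beta do not apply (k = 0, resp. k = N), the
      variation they multiply vanishes.\<close>
    have "grad (\<lambda>y. Hik \<Phi> F i k y (z k) (lam (Suc k)) (\<alpha> (Suc k)) (\<beta> k)) (state F x0 z k)
        \<bullet> \<delta>x k = \<alpha> k \<bullet> \<delta>x k"
      using alpha_rec[of k] \<open>k \<le> N\<close> by (cases "k = 0") (simp_all add: \<delta>x_def)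
    moreover have "grad (\<lambda>l. Hik \<Phi> F i k (state F x0 z k) (z k) l (\<alpha> (Suc k)) (\<beta> k)) (lam (Suc k))
        \<bullet> \<delta>lam (Suc k) = \<beta> (Suc k) \<bullet> \<delta>lam (Suc k)"
      using beta_rec[of k] \<open>k \<le> N\<close> by (cases "k = N") (simp_all add: \<delta>lam_def)
    ultimately show "(if k = i then hessian_entry (cost \<Phi> F N x0) z i j else 0)
        + (\<alpha> (Suc k) \<bullet> \<delta>x (Suc k) - \<beta> (Suc k) \<bullet> \<delta>lam (Suc k))
      = (if k = j then H\<^sub>u k else 0) + (\<alpha> k \<bullet> \<delta>x k - \<beta> k \<bullet> \<delta>lam k)"
      using Hik_variation_step[OF \<open>i \<le> N\<close> \<open>k \<le> N\<close>, of x0 z j "\<alpha> (Suc k)" "\<beta> k"]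
      unfolding \<delta>x_def \<delta>lam_def H\<^sub>u_def lam_costate[OF \<open>k \<le> N\<close>] by (simp add: algebra_simps)
  qed (simp_all add: \<delta>x_def \<delta>lam_def beta_0 alpha_end[simplified])
  with assms(1,2) show ?thesis
    by (simp add: H\<^sub>u_def)
qed

end

theorem theorem1:
  fixes \<Phi> :: "real^'n \<Rightarrow> real \<Rightarrow> real"
    and F :: "real^'n \<Rightarrow> real \<Rightarrow> real^'n"
    and N i :: nat
    and x0 :: "real^'n"
    and z :: "nat \<Rightarrow> real"
    and lam \<alpha> \<beta> :: "nat \<Rightarrow> real^'n"
  assumes N1: "N \<ge> 1"
    and C2_Phi: "C2 (\<lambda>(x, u). \<Phi> x u)"
    and C2_F: "C2 (\<lambda>(x, u). F x u)"
    and i_le: "i \<le> N"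
    and lam_end: "lam (N + 1) = 0"
    and lam_rec: "\<And>k. 1 \<le> k \<Longrightarrow> k \<le> N \<Longrightarrow>
        lam k = Gx \<Phi> F (state F x0 z k) (z k) (lam (k + 1))"
    and beta_0: "\<beta> 0 = 0"
    and beta_rec: "\<And>k. k < N \<Longrightarrow>
        \<beta> (k + 1) = grad (\<lambda>l. Hik \<Phi> F i k (state F x0 z k) (z k) l (\<alpha> (k + 1)) (\<beta> k))
                          (lam (k + 1))"
    and alpha_end: "\<alpha> (N + 1) = 0"
    and alpha_rec: "\<And>k. 1 \<le> k \<Longrightarrow> k \<le> N \<Longrightarrow>
        \<alpha> k = grad (\<lambda>y. Hik \<Phi> F i k y (z k) (lam (k + 1)) (\<alpha> (k + 1)) (\<beta> k))
                     (state F x0 z k)"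
  shows "\<forall>j \<le> N. hessian_entry (cost \<Phi> F N x0) z i j =
           deriv (\<lambda>v. Hik \<Phi> F i j (state F x0 z j) v (lam (j + 1)) (\<alpha> (j + 1)) (\<beta> j)) (z j)"
proof -
  obtain \<Phi>' \<Phi>'' where Phi': "\<And>q. ((\<lambda>(x, u). \<Phi> x u) has_derivative blinfun_apply (\<Phi>' q)) (at q)"
      and Phi'': "\<And>q. (\<Phi>' has_derivative blinfun_apply (\<Phi>'' q)) (at q)"
    using C2_Phi unfolding C2_def by blast
  obtain F' F'' where F': "\<And>q. ((\<lambda>(x, u). F x u) has_derivative blinfun_apply (F' q)) (at q)"
      and F'': "\<And>q. (F' has_derivative blinfun_apply (F'' q)) (at q)"
    using C2_F unfolding C2_def by blast
  interpret smooth_control \<Phi> F \<Phi>' F'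
    by unfold_locales (rule Phi' F' differentiableI[OF Phi''] differentiableI[OF F''])+
  show ?thesis
    using hessian_entry_cost_eq_deriv_Hik[where lam = lam and \<alpha> = \<alpha> and \<beta> = \<beta>,
        OF i_le _ lam_end lam_rec beta_0 beta_rec alpha_end alpha_rec]
    by blast
qed

end
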